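(* Let $R$ be a complete discrete valuation ring of characteristic $p>0$ with uniformizer $\pi$, field of fractions $K$, and normalized valuation $v_K$. Let $H$ be a primitively generated $K$-Hopf algebra of rank $p^n$, let $t_1,\dots,t_n$ be a $K$-basis of $\mathrm{Prim}(H)$ and $B$ the associated matrix. Let $H_0$ be an $R$-Hopf order in $H$. Then there exist an $R$-basis of $\mathrm{Prim}(H_0)$, with associated matrix $A\in M_n(R)$, and a matrix $\Theta=(\theta_{i,j})\in\mathrm{GL}_n(K)$ such that (1) $\Theta$ is lower triangular; (2) $v_K(\theta_{i,i})\ge v_K(\theta_{i,j})$ for all $j\le i\le n$; (3) $\theta_{i,i}=\pi^{v_K(\theta_{i,i})}$ for all $i$; (4) $\Theta A=B\Theta^{(p)}$, where $\Theta^{(p)}=(\theta_{i,j}^p)$.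
   Context: All Hopf algebras are commutative, cocommutative, finitely generated projective, of $p$-power rank. $t$ is primitive if $\Delta(t)=t\otimes1+1\otimes t$; $\mathrm{Prim}(H)$ is the module of primitives; $H$ is primitively generated if generated as an algebra by its primitives (an $R$-Hopf order in a primitively generated $K$-Hopf algebra is primitively generated, with $\mathrm{Prim}$ free). For a basis $s_1,\dots,s_n$ of primitives, the associated matrix $(a_{j,i})$ is defined by $s_i^p=\sum_j a_{j,i}s_j$. An $R$-Hopf order in $H$ is a finitely generated projective $R$-submodule $H_0\subseteq H$ which is an $R$-Hopf algebra under the inherited operations with $KH_0=H$. *)

theory Defs
  imports "HOL-Computational_Algebra.Primes"
begin

text \<open>A valuation v : K^* \<rightarrow> Z (its value at 0 is irrelevant; v(0) = infinity
  is handled by explicit nonzeroness guards).  R is the valuation ring.\<close>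

definition normalized_discrete_valuation :: "('k::field \<Rightarrow> int) \<Rightarrow> bool" where
  "normalized_discrete_valuation v \<longleftrightarrow>
     (\<forall>x y. x \<noteq> 0 \<longrightarrow> y \<noteq> 0 \<longrightarrow> v (x * y) = v x + v y) \<and>
     (\<forall>x y. x \<noteq> 0 \<longrightarrow> y \<noteq> 0 \<longrightarrow> x + y \<noteq> 0 \<longrightarrow> min (v x) (v y) \<le> v (x + y)) \<and>
     (\<forall>z. \<exists>x. x \<noteq> 0 \<and> v x = z)"

definition val_ring :: "('k::field \<Rightarrow> int) \<Rightarrow> 'k set" where
  "val_ring v = {x. x = 0 \<or> 0 \<le> v x}"

definition val_complete :: "('k::field \<Rightarrow> int) \<Rightarrow> bool" where
  "val_complete v \<longleftrightarrow>
     (\<forall>x :: nat \<Rightarrow> 'k.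
        (\<forall>N::int. \<exists>M. \<forall>m\<ge>M. \<forall>m'\<ge>M. x m - x m' = 0 \<or> N \<le> v (x m - x m')) \<longrightarrow>
        (\<exists>L. \<forall>N::int. \<exists>M. \<forall>m\<ge>M. x m - L = 0 \<or> N \<le> v (x m - L)))"

definition complete_dvr_char_p :: "('k::field \<Rightarrow> int) \<Rightarrow> 'k \<Rightarrow> nat \<Rightarrow> bool" where
  "complete_dvr_char_p v \<pi> p \<longleftrightarrow>
     normalized_discrete_valuation v \<and> val_complete v \<and>
     \<pi> \<noteq> 0 \<and> v \<pi> = 1 \<and> prime p \<and> of_nat p = (0::'k)"

text \<open>H is K^I for a finite index type I (basis e_i); H \<otimes> H is K^(I\<times>I)
  (basis e_i \<otimes> e_j).  mu = multiplication constants, u = unit, D = comultiplication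
  constants, e = counit, S = antipode matrix.\<close>

definition ev :: "'i \<Rightarrow> 'i \<Rightarrow> 'k::field" where
  "ev i = (\<lambda>j. if j = i then 1 else 0)"

definition hmul :: "('i::finite \<Rightarrow> 'i \<Rightarrow> 'i \<Rightarrow> 'k::field) \<Rightarrow> ('i \<Rightarrow> 'k) \<Rightarrow> ('i \<Rightarrow> 'k) \<Rightarrow> ('i \<Rightarrow> 'k)" where
  "hmul mu x y = (\<lambda>k. \<Sum>i\<in>UNIV. \<Sum>j\<in>UNIV. x i * y j * mu i j k)"

definition comul :: "('i::finite \<Rightarrow> 'i \<Rightarrow> 'i \<Rightarrow> 'k::field) \<Rightarrow> ('i \<Rightarrow> 'k) \<Rightarrow> ('i \<Rightarrow> 'i \<Rightarrow> 'k)" where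
  "comul D x = (\<lambda>i j. \<Sum>k\<in>UNIV. x k * D k i j)"

definition counit :: "('i::finite \<Rightarrow> 'k::field) \<Rightarrow> ('i \<Rightarrow> 'k) \<Rightarrow> 'k" where
  "counit e x = (\<Sum>k\<in>UNIV. x k * e k)"

definition antipode :: "('i::finite \<Rightarrow> 'i \<Rightarrow> 'k::field) \<Rightarrow> ('i \<Rightarrow> 'k) \<Rightarrow> ('i \<Rightarrow> 'k)" where
  "antipode S x = (\<lambda>j. \<Sum>k\<in>UNIV. x k * S k j)"

definition tensor :: "('i \<Rightarrow> 'k::field) \<Rightarrow> ('i \<Rightarrow> 'k) \<Rightarrow> ('i \<Rightarrow> 'i \<Rightarrow> 'k)" where
  "tensor x y = (\<lambda>i j. x i * y j)"

text \<open>Multiplication on H \<otimes> H: (a\<otimes>b)(c\<otimes>d) = ac \<otimes> bd.\<close>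
definition tmul :: "('i::finite \<Rightarrow> 'i \<Rightarrow> 'i \<Rightarrow> 'k::field) \<Rightarrow> ('i \<Rightarrow> 'i \<Rightarrow> 'k) \<Rightarrow> ('i \<Rightarrow> 'i \<Rightarrow> 'k) \<Rightarrow> ('i \<Rightarrow> 'i \<Rightarrow> 'k)" where
  "tmul mu T1 T2 = (\<lambda>k l. \<Sum>i\<in>UNIV. \<Sum>j\<in>UNIV. \<Sum>i'\<in>UNIV. \<Sum>j'\<in>UNIV.
       T1 i j * T2 i' j' * mu i i' k * mu j j' l)"

fun hpow :: "('i::finite \<Rightarrow> 'i \<Rightarrow> 'i \<Rightarrow> 'k::field) \<Rightarrow> ('i \<Rightarrow> 'k) \<Rightarrow> ('i \<Rightarrow> 'k) \<Rightarrow> nat \<Rightarrow> ('i \<Rightarrow> 'k)" where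
  "hpow mu u x 0 = u"
| "hpow mu u x (Suc m) = hmul mu x (hpow mu u x m)"

definition comm_cocomm_hopf_algebra ::
  "('i::finite \<Rightarrow> 'i \<Rightarrow> 'i \<Rightarrow> 'k::field) \<Rightarrow> ('i \<Rightarrow> 'k) \<Rightarrow> ('i \<Rightarrow> 'i \<Rightarrow> 'i \<Rightarrow> 'k)
    \<Rightarrow> ('i \<Rightarrow> 'k) \<Rightarrow> ('i \<Rightarrow> 'i \<Rightarrow> 'k) \<Rightarrow> bool" where
  "comm_cocomm_hopf_algebra mu u D e S \<longleftrightarrow>
     \<comment> \<open>commutative associative unital K-algebra\<close>
     (\<forall>x y z. hmul mu (hmul mu x y) z = hmul mu x (hmul mu y z)) \<and>
     (\<forall>x y. hmul mu x y = hmul mu y x) \<and>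
     (\<forall>x. hmul mu u x = x) \<and>
     \<comment> \<open>coassociative, cocommutative, counital coalgebra\<close>
     (\<forall>k i j l. (\<Sum>a\<in>UNIV. D k a l * D a i j) = (\<Sum>b\<in>UNIV. D k i b * D b j l)) \<and>
     (\<forall>k i j. D k i j = D k j i) \<and>
     (\<forall>k j. (\<Sum>i\<in>UNIV. e i * D k i j) = (if k = j then 1 else 0)) \<and>
     (\<forall>k i. (\<Sum>j\<in>UNIV. e j * D k i j) = (if k = i then 1 else 0)) \<and>
     \<comment> \<open>comultiplication and counit are algebra homomorphisms\<close>
     (\<forall>x y. comul D (hmul mu x y) = tmul mu (comul D x) (comul D y)) \<and>
     comul D u = tensor u u \<and>
     (\<forall>x y. counit e (hmul mu x y) = counit e x * counit e y) \<and>
     counit e u = 1 \<and>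
     \<comment> \<open>antipode: m (S \<otimes> id) \<Delta> = m (id \<otimes> S) \<Delta> = u \<epsilon>\<close>
     (\<forall>x. (\<lambda>l. \<Sum>i\<in>UNIV. \<Sum>j\<in>UNIV. comul D x i j * hmul mu (antipode S (ev i)) (ev j) l)
          = (\<lambda>l. counit e x * u l)) \<and>
     (\<forall>x. (\<lambda>l. \<Sum>i\<in>UNIV. \<Sum>j\<in>UNIV. comul D x i j * hmul mu (ev i) (antipode S (ev j)) l)
          = (\<lambda>l. counit e x * u l))"

definition primitive :: "('i::finite \<Rightarrow> 'i \<Rightarrow> 'i \<Rightarrow> 'k::field) \<Rightarrow> ('i \<Rightarrow> 'k) \<Rightarrow> ('i \<Rightarrow> 'k) \<Rightarrow> bool" where
  "primitive D u x \<longleftrightarrow> comul D x = (\<lambda>i j. x i * u j + u i * x j)"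

definition Prim :: "('i::finite \<Rightarrow> 'i \<Rightarrow> 'i \<Rightarrow> 'k::field) \<Rightarrow> ('i \<Rightarrow> 'k) \<Rightarrow> ('i \<Rightarrow> 'k) set" where
  "Prim D u = {x. primitive D u x}"

inductive_set alg_gen :: "('i::finite \<Rightarrow> 'i \<Rightarrow> 'i \<Rightarrow> 'k::field) \<Rightarrow> ('i \<Rightarrow> 'k) \<Rightarrow> ('i \<Rightarrow> 'k) set \<Rightarrow> ('i \<Rightarrow> 'k) set"
  for mu u X where
  gen_unit: "u \<in> alg_gen mu u X"
| gen_base: "x \<in> X \<Longrightarrow> x \<in> alg_gen mu u X"
| gen_add: "x \<in> alg_gen mu u X \<Longrightarrow> y \<in> alg_gen mu u X \<Longrightarrow> (\<lambda>k. x k + y k) \<in> alg_gen mu u X"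
| gen_smult: "x \<in> alg_gen mu u X \<Longrightarrow> (\<lambda>k. c * x k) \<in> alg_gen mu u X"
| gen_mul: "x \<in> alg_gen mu u X \<Longrightarrow> y \<in> alg_gen mu u X \<Longrightarrow> hmul mu x y \<in> alg_gen mu u X"

definition primitively_generated where
  "primitively_generated mu u D \<longleftrightarrow> alg_gen mu u (Prim D u) = UNIV"

definition lincomb :: "nat \<Rightarrow> (nat \<Rightarrow> 'k::field) \<Rightarrow> (nat \<Rightarrow> 'i \<Rightarrow> 'k) \<Rightarrow> ('i \<Rightarrow> 'k)" where
  "lincomb r c b = (\<lambda>k. \<Sum>l<r. c l * b l k)"

definition is_basis_over :: "'k::field set \<Rightarrow> nat \<Rightarrow> (nat \<Rightarrow> 'i \<Rightarrow> 'k) \<Rightarrow> ('i \<Rightarrow> 'k) set \<Rightarrow> bool" where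
  "is_basis_over C r b X \<longleftrightarrow>
     (\<forall>l<r. b l \<in> X) \<and>
     (\<forall>c. (\<forall>l<r. c l \<in> C) \<longrightarrow> lincomb r c b = (\<lambda>_. 0) \<longrightarrow> (\<forall>l<r. c l = 0)) \<and>
     X = {lincomb r c b | c. \<forall>l<r. c l \<in> C}"

text \<open>An R-Hopf order: a finitely generated projective (over the DVR R: free of finite
  rank) R-submodule H0 of H, closed under the inherited Hopf operations
  (\<Delta>(H0) inside the image of H0 \<otimes>_R H0 in H \<otimes>_K H), with K H0 = H.\<close>
definition hopf_order ::
  "('k::field \<Rightarrow> int) \<Rightarrow> ('i::finite \<Rightarrow> 'i \<Rightarrow> 'i \<Rightarrow> 'k) \<Rightarrow> ('i \<Rightarrow> 'k) \<Rightarrow> ('i \<Rightarrow> 'i \<Rightarrow> 'i \<Rightarrow> 'k)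
    \<Rightarrow> ('i \<Rightarrow> 'k) \<Rightarrow> ('i \<Rightarrow> 'i \<Rightarrow> 'k) \<Rightarrow> ('i \<Rightarrow> 'k) set \<Rightarrow> bool" where
  "hopf_order v mu u D e S H0 \<longleftrightarrow>
     (\<exists>r b. is_basis_over (val_ring v) r b H0) \<and>
     u \<in> H0 \<and>
     (\<forall>x\<in>H0. \<forall>y\<in>H0. hmul mu x y \<in> H0) \<and>
     (\<forall>x\<in>H0. counit e x \<in> val_ring v) \<and>
     (\<forall>x\<in>H0. antipode S x \<in> H0) \<and>
     (\<forall>x\<in>H0. \<exists>(r::nat) c y z. (\<forall>l<r. c l \<in> val_ring v \<and> y l \<in> H0 \<and> z l \<in> H0) \<and>
        comul D x = (\<lambda>i j. \<Sum>l<r. c l * y l i * z l j)) \<and>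
     (\<forall>x. \<exists>r c b. (\<forall>l<r. b l \<in> H0) \<and> x = lincomb r c b)"

end

theory Submission
  imports Defs "HOL-Library.Function_Algebras" "HOL.Vector_Spaces"
begin

text \<open>Coordinates with respect to the \<open>K\<close>-basis \<open>t\<close> identify \<open>H\<^sub>0 \<inter> Prim(H)\<close> with a set
  \<open>L \<subseteq> K\<^sup>n\<close> that is an \<open>R\<close>-module, bounded below in valuation (because \<open>H\<^sub>0\<close> is finitely
  generated over \<open>R\<close>) and of full rank (because \<open>K H\<^sub>0 = H\<close>). Such a lattice has an echelon
  basis: for each \<open>j\<close> a vector of \<open>L\<close> vanishing before \<open>j\<close> whose \<open>j\<close>-th entry is \<open>\<pi>\<^sup>a\<close> with
  \<open>a\<close> minimal, its later entries reduced modulo the later pivots so that their valuations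
  stay below those pivots. These vectors are the columns of the lower triangular matrix
  \<open>\<Theta>\<close>, and in characteristic \<open>p\<close> the Frobenius identity
  \<open>(\<Sum> c\<^sub>l t\<^sub>l)\<^sup>p = \<Sum> c\<^sub>l\<^sup>p t\<^sub>l\<^sup>p\<close> turns the \<open>p\<close>-power matrix \<open>A\<close> of the new basis into
  \<open>\<Theta> A = B \<Theta>\<^bsup>(p)\<^esup>\<close>.
  Only the algebra structure of \<open>H\<close> and \<open>H\<^sub>0\<close> enters.\<close>

section \<open>Discrete valuations\<close>

definition val_ge :: "('k::field \<Rightarrow> int) \<Rightarrow> int \<Rightarrow> 'k \<Rightarrow> bool" where
  "val_ge v N x \<longleftrightarrow> x = 0 \<or> N \<le> v x"

locale discrete_valuation =
  fixes v :: "'k::field \<Rightarrow> int"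
  assumes normalized: "normalized_discrete_valuation v"
begin

lemma val_mult: "x \<noteq> 0 \<Longrightarrow> y \<noteq> 0 \<Longrightarrow> v (x * y) = v x + v y"
  using normalized unfolding normalized_discrete_valuation_def by blast

lemma val_add_ge_min: "x \<noteq> 0 \<Longrightarrow> y \<noteq> 0 \<Longrightarrow> x + y \<noteq> 0 \<Longrightarrow> min (v x) (v y) \<le> v (x + y)"
  using normalized unfolding normalized_discrete_valuation_def by blast

lemma val_one [simp]: "v 1 = 0"
  using val_mult[of 1 1] by simp

lemma val_minus [simp]: "v (- x) = v x"
proof (cases "x = 0")
  case False
  have "v (-1) = 0" using val_mult[of "-1" "-1"] by simp
  then show ?thesis using val_mult[of "-1" x] False by simp
qed simp

lemma val_inverse: "x \<noteq> 0 \<Longrightarrow> v (inverse x) = - v x"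
  using val_mult[of x "inverse x"] by simp

lemma val_divide: "x \<noteq> 0 \<Longrightarrow> y \<noteq> 0 \<Longrightarrow> v (x / y) = v x - v y"
  using val_mult[of x "inverse y"] val_inverse[of y] by (simp add: divide_inverse)

lemma val_power: "x \<noteq> 0 \<Longrightarrow> v (x ^ m) = int m * v x"
  by (induction m) (auto simp: val_mult algebra_simps)

lemma val_power_int: "x \<noteq> 0 \<Longrightarrow> v (x powi k) = k * v x"
  by (cases "k \<ge> 0")
     (auto simp: power_int_def power_inverse val_power val_inverse)

lemma val_ge_0 [simp]: "val_ge v N 0"
  by (simp add: val_ge_def)

lemma val_ge_mono: "val_ge v N x \<Longrightarrow> M \<le> N \<Longrightarrow> val_ge v M x"
  by (auto simp: val_ge_def)

lemma val_ge_add: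
  assumes "val_ge v N x" "val_ge v N y"
  shows "val_ge v N (x + y)"
proof (cases "x = 0 \<or> y = 0 \<or> x + y = 0")
  case False
  then show ?thesis using assms val_add_ge_min[of x y] by (auto simp: val_ge_def)
qed (use assms in \<open>auto simp: val_ge_def\<close>)

lemma val_ge_minus: "val_ge v N x \<Longrightarrow> val_ge v N (- x)"
  by (auto simp: val_ge_def)

lemma val_ge_mult: "val_ge v N x \<Longrightarrow> val_ge v M y \<Longrightarrow> val_ge v (N + M) (x * y)"
  using val_mult[of x y] by (cases "x = 0"; cases "y = 0") (auto simp: val_ge_def)

lemma val_ge_sum: "(\<And>a. a \<in> A \<Longrightarrow> val_ge v N (f a)) \<Longrightarrow> val_ge v N (\<Sum>a\<in>A. f a)"
  by (induction A rule: infinite_finite_induct) (auto intro: val_ge_add)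

lemma finite_val_ge_bound: "finite F \<Longrightarrow> \<exists>N. \<forall>x\<in>F. val_ge v N x"
proof (induction F rule: finite_induct)
  case (insert x F)
  then obtain N where "\<forall>y\<in>F. val_ge v N y" by blast
  then have "\<forall>y\<in>insert x F. val_ge v (min N (v x)) y"
    by (auto simp: val_ge_def)
  then show ?case by blast
qed simp

lemma val_ring_iff_val_ge: "x \<in> val_ring v \<longleftrightarrow> val_ge v 0 x"
  by (auto simp: val_ring_def val_ge_def)

lemma val_ring_0 [simp]: "0 \<in> val_ring v" and val_ring_1 [simp]: "1 \<in> val_ring v"
  by (simp_all add: val_ring_def)

lemma val_ring_add: "x \<in> val_ring v \<Longrightarrow> y \<in> val_ring v \<Longrightarrow> x + y \<in> val_ring v"
  by (simp add: val_ring_iff_val_ge val_ge_add)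

lemma val_ring_minus: "x \<in> val_ring v \<Longrightarrow> - x \<in> val_ring v"
  by (simp add: val_ring_iff_val_ge val_ge_minus)

lemma val_ring_mult: "x \<in> val_ring v \<Longrightarrow> y \<in> val_ring v \<Longrightarrow> x * y \<in> val_ring v"
  using val_ge_mult[of 0 x 0 y] by (simp add: val_ring_iff_val_ge)

lemma divide_in_val_ring: "y \<noteq> 0 \<Longrightarrow> val_ge v (v y) x \<Longrightarrow> x / y \<in> val_ring v"
  by (cases "x = 0") (auto simp: val_ring_def val_ge_def val_divide)

end

section \<open>Echelon bases of lattices in \<open>K\<^sup>n\<close>\<close>

lemma echelon_independent:
  fixes s :: "nat \<Rightarrow> nat \<Rightarrow> 'k::field"
  assumes echelon: "\<forall>j<n. \<forall>m<j. s j m = 0" and pivot: "\<forall>j<n. s j j \<noteq> 0"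
    and zero: "\<forall>m<n. (\<Sum>l<n. c l * s l m) = 0"
  shows "\<forall>l<n. c l = 0"
proof (intro allI impI)
  fix l assume "l < n"
  then show "c l = 0"
  proof (induction l rule: less_induct)
    case (less l)
    have "(\<Sum>k<n. c k * s k l) = (\<Sum>k<n. if k = l then c l * s l l else 0)"
    proof (rule sum.cong)
      fix k assume "k \<in> {..<n}"
      then show "c k * s k l = (if k = l then c l * s l l else 0)"
        using less echelon by (cases k l rule: linorder_cases) auto
    qed simp
    also have "\<dots> = c l * s l l" using less.prems by simp
    finally show ?case using zero pivot less.prems by simp
  qed
qed

text \<open>Gaussian elimination against the rows \<open>s j\<close>: \<open>P\<close> is an invariant of the vector being
  reduced and \<open>Q\<close> a property of the coefficients that it guarantees.\<close>
lemma echelon_elimination: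
  fixes s :: "nat \<Rightarrow> nat \<Rightarrow> 'k::field"
  assumes echelon: "\<forall>j<n. \<forall>m<j. s j m = 0" and pivot: "\<forall>j<n. s j j \<noteq> 0"
    and Q_0: "Q 0" and Q_add: "\<And>a b. Q a \<Longrightarrow> Q b \<Longrightarrow> Q (a + b)"
    and step: "\<And>j c. j < n \<Longrightarrow> P c \<Longrightarrow> \<forall>l<j. c l = 0 \<Longrightarrow>
                 Q (c j / s j j) \<and> P (\<lambda>m. c m - c j / s j j * s j m)"
    and "P c"
  shows "\<exists>r. (\<forall>l. Q (r l)) \<and> (\<forall>m<n. c m = (\<Sum>l<n. r l * s l m))"
proof -
  have "\<exists>r. (\<forall>l. Q (r l)) \<and> (\<forall>m<n. c m = (\<Sum>l<n. r l * s l m))"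
    if "j \<le> n" "P c" "\<forall>l<j. c l = 0" for j c
    using that
  proof (induction "n - j" arbitrary: j c)
    case 0
    then show ?case using Q_0 by (intro exI[of _ "\<lambda>_. 0"]) auto
  next
    case (Suc k)
    then have j: "j < n" by simp
    define q where "q = c j / s j j"
    define c' where "c' = (\<lambda>m. c m - q * s j m)"
    have "Q q" "P c'" using step[OF j Suc.prems(2,3)] by (simp_all add: q_def c'_def)
    moreover have "\<forall>l<Suc j. c' l = 0"
      using Suc.prems echelon pivot j by (auto simp: c'_def q_def less_Suc_eq)
    ultimately obtain r where r: "\<forall>l. Q (r l)" "\<forall>m<n. c' m = (\<Sum>l<n. r l * s l m)"
      using Suc.hyps(1)[of "Suc j" c'] Suc.hyps(2) j by fastforce
    have "c m = (\<Sum>l<n. (r(j := r j + q)) l * s l m)" if "m < n" for m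
    proof -
      have "(\<Sum>l<n. (r(j := r j + q)) l * s l m)
          = (\<Sum>l<n. r l * s l m + (if l = j then q * s j m else 0))"
        by (rule sum.cong) (auto simp: algebra_simps)
      also have "\<dots> = c' m + q * s j m" using j r(2) that by (simp add: sum.distrib)
      finally show ?thesis by (simp add: c'_def)
    qed
    then show ?case using r(1) \<open>Q q\<close> Q_add by (intro exI[of _ "r(j := r j + q)"]) auto
  qed
  then show ?thesis using \<open>P c\<close> by blast
qed

lemma lower_triangular_invertible:
  fixes \<Theta> :: "nat \<Rightarrow> nat \<Rightarrow> 'k::field"
  assumes lower: "\<forall>i<n. \<forall>j<n. i < j \<longrightarrow> \<Theta> i j = 0" and diag: "\<forall>i<n. \<Theta> i i \<noteq> 0"
  shows "\<exists>\<Psi>. \<forall>i<n. \<forall>j<n.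
           (\<Sum>k<n. \<Theta> i k * \<Psi> k j) = (if i = j then 1 else 0) \<and>
           (\<Sum>k<n. \<Psi> i k * \<Theta> k j) = (if i = j then 1 else 0)"
proof -
  define s where "s = (\<lambda>j m. \<Theta> m j)"
  have echelon: "\<forall>j<n. \<forall>m<j. s j m = 0" and pivot: "\<forall>j<n. s j j \<noteq> 0"
    using lower diag by (auto simp: s_def)
  have "\<exists>r. \<forall>i<n. (if i = j then 1 else 0) = (\<Sum>l<n. r l * s l i)" for j
    using echelon_elimination[OF echelon pivot, where Q = "\<lambda>_. True" and P = "\<lambda>_. True"] by auto
  then obtain r where r: "\<And>j. \<forall>i<n. (if i = j then 1 else 0) = (\<Sum>l<n. r j l * s l i)"
    by metis
  define \<Psi> where "\<Psi> = (\<lambda>l j. r j l)"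
  have \<Psi>: "(if i = j then 1 else 0) = (\<Sum>l<n. \<Psi> l j * s l i)" if "i < n" for i j
    using r that by (simp add: \<Psi>_def)
  have right: "(\<Sum>k<n. \<Theta> i k * \<Psi> k j) = (if i = j then 1 else 0)" if "i < n" for i j
    using \<Psi>[OF that, of j] by (simp add: s_def mult.commute)
  have left: "(\<Sum>k<n. \<Psi> i k * \<Theta> k j) = (if i = j then 1 else 0)" if "i < n" "j < n" for i j
  proof -
    define c where "c = (\<lambda>i. (\<Sum>k<n. \<Psi> i k * \<Theta> k j) - (if i = j then 1 else 0))"
    have "(\<Sum>i<n. c i * s i m) = 0" if "m < n" for m
    proof -
      have "(\<Sum>i<n. (\<Sum>k<n. \<Psi> i k * \<Theta> k j) * \<Theta> m i)
          = (\<Sum>k<n. \<Theta> k j * (\<Sum>i<n. \<Theta> m i * \<Psi> i k))"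
        unfolding sum_distrib_left sum_distrib_right
        by (subst sum.swap) (simp add: mult_ac)
      also have "\<dots> = (\<Sum>k<n. if k = m then \<Theta> k j else 0)"
        using right \<open>m < n\<close> by (intro sum.cong) auto
      also have "\<dots> = \<Theta> m j" using \<open>m < n\<close> by simp
      finally have "(\<Sum>i<n. (\<Sum>k<n. \<Psi> i k * \<Theta> k j) * \<Theta> m i) = \<Theta> m j" .
      moreover have "(\<Sum>i<n. (if i = j then 1 else 0) * \<Theta> m i) = \<Theta> m j"
        using \<open>j < n\<close> by (simp add: if_distrib[of "\<lambda>x. x * _"] cong: if_cong)
      ultimately show ?thesis
        by (simp add: c_def s_def left_diff_distrib sum_subtractf)
    qed
    then have "c i = 0" using echelon_independent[OF echelon pivot] \<open>i < n\<close> by blast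
    then show ?thesis by (simp add: c_def)
  qed
  show ?thesis using left right by blast
qed

lemma lincomb_cong: "(\<And>m. m < n \<Longrightarrow> c m = c' m) \<Longrightarrow> lincomb n c t = lincomb n c' t"
  unfolding lincomb_def by (intro ext sum.cong) auto

lemma lincomb_linear:
  "lincomb n (\<lambda>l. \<alpha> * c l + \<beta> * c' l) t = (\<lambda>k. \<alpha> * lincomb n c t k + \<beta> * lincomb n c' t k)"
  by (rule ext) (simp add: lincomb_def sum_distrib_left sum.distrib algebra_simps)

lemma lincomb_lincomb:
  "lincomb n c (\<lambda>l. lincomb n (s l) t) = lincomb n (\<lambda>m. \<Sum>l<n. c l * s l m) t"
proof (rule ext)
  fix k
  have "lincomb n c (\<lambda>l. lincomb n (s l) t) k = (\<Sum>l<n. \<Sum>m<n. c l * s l m * t m k)"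
    by (simp add: lincomb_def sum_distrib_left mult.assoc)
  also have "\<dots> = (\<Sum>m<n. \<Sum>l<n. c l * s l m * t m k)"
    by (rule sum.swap)
  finally show "lincomb n c (\<lambda>l. lincomb n (s l) t) k = lincomb n (\<lambda>m. \<Sum>l<n. c l * s l m) t k"
    by (simp add: lincomb_def sum_distrib_right)
qed

lemma lincomb_injective:
  assumes indep: "\<forall>c. lincomb n c t = (\<lambda>_. 0) \<longrightarrow> (\<forall>l<n. c l = 0)"
    and eq: "lincomb n c t = lincomb n c' t"
  shows "\<forall>m<n. c m = c' m"
proof -
  have "lincomb n (\<lambda>l. 1 * c l + (-1) * c' l) t = (\<lambda>_. 0)"
    unfolding lincomb_linear using eq by simp
  then show ?thesis using indep by fastforce
qed

lemma basis_over_coeffs_exist: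
  assumes "is_basis_over C n b X" and "\<forall>i<m. f i \<in> X"
  shows "\<exists>A. \<forall>i<m. (\<forall>j<n. A j i \<in> C) \<and> f i = lincomb n (\<lambda>j. A j i) b"
proof -
  have "\<forall>i<m. \<exists>c. (\<forall>j<n. c j \<in> C) \<and> f i = lincomb n c b"
    using assms unfolding is_basis_over_def by blast
  then obtain c where "\<forall>i<m. (\<forall>j<n. c i j \<in> C) \<and> f i = lincomb n (c i) b"
    by metis
  then show ?thesis by (intro exI[of _ "\<lambda>j i. c i j"]) auto
qed

lemma int_bounded_below_Inf:
  fixes S :: "int set"
  assumes "S \<noteq> {}" and "\<forall>y\<in>S. N \<le> y"
  shows "Inf S \<in> S \<and> (\<forall>y\<in>S. Inf S \<le> y)"
proof -
  obtain x where x: "x \<in> S" using assms(1) by blast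
  define F where "F = S \<inter> {N..x}"
  have F: "finite F" "x \<in> F" using x assms(2) by (auto simp: F_def)
  have least: "Min F \<le> y" if "y \<in> S" for y
  proof (cases "y \<le> x")
    case True
    then show ?thesis using that assms(2) F(1) by (intro Min_le) (auto simp: F_def)
  next
    case False
    then show ?thesis using Min_le[OF F] by linarith
  qed
  have "Min F \<in> F" using F Min_in by blast
  then have "Min F \<in> S" by (simp add: F_def)
  then show ?thesis using least cInf_eq_minimum[of "Min F" S] by auto
qed

locale full_lattice = discrete_valuation v for v :: "'k::field \<Rightarrow> int" +
  fixes \<pi> :: 'k and n :: nat and L :: "(nat \<Rightarrow> 'k) set"
  assumes uniformizer_nonzero [simp]: "\<pi> \<noteq> 0" and val_uniformizer: "v \<pi> = 1"
    and lattice_zero: "(\<lambda>_. 0) \<in> L"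
    and lattice_comb: "\<lbrakk>c \<in> L; d \<in> L; \<alpha> \<in> val_ring v; \<beta> \<in> val_ring v\<rbrakk> \<Longrightarrow>
      (\<lambda>l. \<alpha> * c l + \<beta> * d l) \<in> L"
    and lattice_bounded: "\<exists>N. \<forall>c\<in>L. \<forall>m<n. val_ge v N (c m)"
    and lattice_full: "j < n \<Longrightarrow> \<exists>N::nat. (\<lambda>l. if l = j then \<pi> ^ N else 0) \<in> L"
begin

lemma val_uniformizer_power_int [simp]: "v (\<pi> powi k) = k"
  using val_power_int[OF uniformizer_nonzero] by (simp add: val_uniformizer)

lemma lattice_diff: "c \<in> L \<Longrightarrow> d \<in> L \<Longrightarrow> q \<in> val_ring v \<Longrightarrow> (\<lambda>l. c l - q * d l) \<in> L"
  using lattice_comb[of c d 1 "- q"] by (simp add: val_ring_minus)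

lemma lattice_sum:
  "(\<And>l. l \<in> A \<Longrightarrow> r l \<in> val_ring v \<and> s l \<in> L) \<Longrightarrow> (\<lambda>m. \<Sum>l\<in>A. r l * s l m) \<in> L"
proof (induction A rule: infinite_finite_induct)
  case (insert x F)
  then have "(\<lambda>m. r x * s x m + 1 * (\<Sum>l\<in>F. r l * s l m)) \<in> L"
    by (intro lattice_comb) auto
  then show ?case using insert by simp
qed (simp_all add: lattice_zero)

definition pivot_vals :: "nat \<Rightarrow> int set" where
  "pivot_vals j = {v (c j) | c. c \<in> L \<and> (\<forall>l<j. c l = 0) \<and> c j \<noteq> 0}"

definition pivot :: "nat \<Rightarrow> int" where
  "pivot j = Inf (pivot_vals j)"

lemma pivot_least:
  assumes "j < n"
  shows "pivot j \<in> pivot_vals j \<and> (\<forall>y\<in>pivot_vals j. pivot j \<le> y)"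
proof -
  obtain N :: nat where "(\<lambda>l. if l = j then \<pi> ^ N else 0) \<in> L"
    using lattice_full[OF assms] by blast
  then have "v (\<pi> ^ N) \<in> pivot_vals j"
    unfolding pivot_vals_def using uniformizer_nonzero
    by (intro CollectI exI[of _ "\<lambda>l. if l = j then \<pi> ^ N else 0"]) auto
  moreover obtain M where "\<forall>c\<in>L. \<forall>m<n. val_ge v M (c m)"
    using lattice_bounded by blast
  then have "\<forall>y\<in>pivot_vals j. M \<le> y"
    using assms by (auto simp: pivot_vals_def val_ge_def)
  ultimately show ?thesis
    unfolding pivot_def by (intro int_bounded_below_Inf) auto
qed

lemma val_ge_pivot:
  assumes "j < n" "c \<in> L" "\<forall>l<j. c l = 0"
  shows "val_ge v (pivot j) (c j)"
  using pivot_least[OF assms(1)] assms by (auto simp: val_ge_def pivot_vals_def)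

lemma pivot_vector_exists:
  assumes "j < n"
  shows "\<exists>\<sigma>\<in>L. (\<forall>m<j. \<sigma> m = 0) \<and> \<sigma> j = \<pi> powi pivot j"
proof -
  obtain c where c: "c \<in> L" "\<forall>l<j. c l = 0" "c j \<noteq> 0" "v (c j) = pivot j"
    using pivot_least[OF assms] by (auto simp: pivot_vals_def)
  define \<alpha> where "\<alpha> = \<pi> powi pivot j / c j"
  have "\<alpha> \<in> val_ring v"
    using c by (simp add: \<alpha>_def val_ring_def val_divide)
  then have "(\<lambda>l. \<alpha> * c l) \<in> L"
    using lattice_comb[OF c(1) c(1), of \<alpha> 0] by simp
  moreover have "\<alpha> * c j = \<pi> powi pivot j" using c(3) by (simp add: \<alpha>_def)
  ultimately show ?thesis using c(2) by (intro bexI[of _ "\<lambda>l. \<alpha> * c l"]) auto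
qed

text \<open>Clearing the entries after the pivot, one column at a time, against the pivot
  vectors of the later columns.\<close>
lemma reduced_pivot_vector_exists:
  assumes j: "j < n"
  shows "i \<le> n \<Longrightarrow> \<exists>c\<in>L. (\<forall>m<j. c m = 0) \<and> c j = \<pi> powi pivot j \<and>
           (\<forall>m. j < m \<and> m < i \<longrightarrow> c m = 0 \<or> v (c m) < pivot m)"
proof (induction i)
  case 0
  then show ?case using pivot_vector_exists[OF j] by auto
next
  case (Suc i)
  then obtain c where c: "c \<in> L" "\<forall>m<j. c m = 0" "c j = \<pi> powi pivot j"
    "\<forall>m. j < m \<and> m < i \<longrightarrow> c m = 0 \<or> v (c m) < pivot m"
    by auto
  show ?case
  proof (cases "j < i \<and> c i \<noteq> 0 \<and> pivot i \<le> v (c i)")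
    case False
    then show ?thesis using c by (intro bexI[of _ c]) (auto simp: less_Suc_eq)
  next
    case True
    obtain \<sigma> where \<sigma>: "\<sigma> \<in> L" "\<forall>m<i. \<sigma> m = 0" "\<sigma> i = \<pi> powi pivot i"
      using pivot_vector_exists Suc.prems by (metis Suc_le_eq)
    define q where "q = c i / \<sigma> i"
    have "q \<in> val_ring v"
      unfolding q_def using True \<sigma>(3) by (intro divide_in_val_ring) (auto simp: val_ge_def)
    then have "(\<lambda>m. c m - q * \<sigma> m) \<in> L" using c(1) \<sigma>(1) by (rule lattice_diff[rotated 2])
    moreover have "c i - q * \<sigma> i = 0" using \<sigma>(3) by (simp add: q_def)
    ultimately show ?thesis
      using c \<sigma>(2) True by (intro bexI[of _ "\<lambda>m. c m - q * \<sigma> m"]) (auto simp: less_Suc_eq)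
  qed
qed

theorem echelon_basis_exists:
  "\<exists>s. (\<forall>j<n. s j \<in> L \<and> (\<forall>m<j. s j m = 0) \<and> s j j = \<pi> powi pivot j \<and>
         (\<forall>m. j < m \<and> m < n \<longrightarrow> s j m = 0 \<or> v (s j m) < pivot m)) \<and>
       (\<forall>c\<in>L. \<exists>r. (\<forall>l. r l \<in> val_ring v) \<and> (\<forall>m<n. c m = (\<Sum>l<n. r l * s l m)))"
proof -
  obtain s where s: "\<forall>j<n. s j \<in> L \<and> (\<forall>m<j. s j m = 0) \<and> s j j = \<pi> powi pivot j \<and>
      (\<forall>m. j < m \<and> m < n \<longrightarrow> s j m = 0 \<or> v (s j m) < pivot m)"
    using reduced_pivot_vector_exists[OF _ order.refl] by metis
  have echelon: "\<forall>j<n. \<forall>m<j. s j m = 0" and pivot: "\<forall>j<n. s j j \<noteq> 0"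
    using s by auto
  have "\<exists>r. (\<forall>l. r l \<in> val_ring v) \<and> (\<forall>m<n. c m = (\<Sum>l<n. r l * s l m))" if "c \<in> L" for c
  proof (rule echelon_elimination[OF echelon pivot, where P = "\<lambda>c. c \<in> L"])
    fix j c assume "j < n" "c \<in> L" "\<forall>l<j. c l = 0"
    moreover from this have q: "c j / s j j \<in> val_ring v"
      using s val_ge_pivot by (intro divide_in_val_ring) auto
    ultimately show "c j / s j j \<in> val_ring v \<and> (\<lambda>m. c m - c j / s j j * s j m) \<in> L"
      using s lattice_diff by blast
  qed (use that val_ring_add in auto)
  then show ?thesis using s by blast
qed

lemma echelon_lincomb_basis:
  assumes t: "is_basis_over UNIV n t P" and L: "L = {c. lincomb n c t \<in> H0}"
    and s: "\<forall>j<n. s j \<in> L \<and> (\<forall>m<j. s j m = 0) \<and> s j j \<noteq> 0"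
    and span: "\<forall>c\<in>L. \<exists>r. (\<forall>l. r l \<in> val_ring v) \<and> (\<forall>m<n. c m = (\<Sum>l<n. r l * s l m))"
  shows "is_basis_over (val_ring v) n (\<lambda>j. lincomb n (s j) t) (H0 \<inter> P)"
proof -
  have P: "P = {lincomb n c t | c. True}" and indep: "\<forall>c. lincomb n c t = (\<lambda>_. 0) \<longrightarrow> (\<forall>l<n. c l = 0)"
    using t by (simp_all add: is_basis_over_def)
  let ?b = "\<lambda>j. lincomb n (s j) t"
  have comb_mem: "lincomb n r ?b \<in> H0 \<inter> P" if "\<forall>l<n. r l \<in> val_ring v" for r
    using that s lattice_sum[of "{..<n}" r s] by (auto simp: lincomb_lincomb L P)
  have "\<forall>l<n. r l = 0" if "\<forall>l<n. r l \<in> val_ring v" "lincomb n r ?b = (\<lambda>_. 0)" for r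
  proof -
    have "lincomb n (\<lambda>m. \<Sum>l<n. r l * s l m) t = lincomb n (\<lambda>_. 0) t"
      using that(2) by (simp add: lincomb_lincomb[symmetric] lincomb_def)
    then show ?thesis
      using lincomb_injective[OF indep] echelon_independent[of n s r] s by auto
  qed
  moreover have "x \<in> {lincomb n r ?b | r. \<forall>l<n. r l \<in> val_ring v}" if x: "x \<in> H0 \<inter> P" for x
  proof -
    obtain c where c: "x = lincomb n c t" "c \<in> L" using x P L by auto
    then obtain r where r: "\<forall>l. r l \<in> val_ring v" "\<forall>m<n. c m = (\<Sum>l<n. r l * s l m)"
      using span by blast
    have "x = lincomb n r ?b" unfolding c(1) lincomb_lincomb by (rule lincomb_cong) (use r in auto)
    then show ?thesis using r by blast
  qed
  moreover have "\<forall>l<n. ?b l \<in> H0 \<inter> P" using s by (auto simp: L P)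
  ultimately show ?thesis
    unfolding is_basis_over_def using comb_mem by blast
qed

end

section \<open>Frobenius in algebras given by structure constants\<close>

lemma (in comm_semiring_1) add_power_prime_char:
  assumes "prime p" "of_nat p = 0"
  shows "(x + y) ^ p = x ^ p + y ^ p"
proof -
  have "(x + y) ^ p = (\<Sum>k\<le>p. of_nat (p choose k) * x ^ k * y ^ (p - k))"
    by (rule binomial_ring)
  also have "\<dots> = (\<Sum>k\<in>{0, p}. of_nat (p choose k) * x ^ k * y ^ (p - k))"
  proof (intro sum.mono_neutral_right ballI)
    fix k assume "k \<in> {..p} - {0, p}"
    then have "p dvd (p choose k)" using assms(1) by (intro dvd_choose_prime) auto
    then show "of_nat (p choose k) * x ^ k * y ^ (p - k) = 0"
      using assms(2) by (auto simp: of_nat_mult)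
  qed auto
  finally show ?thesis using prime_gt_0_nat[OF assms(1)] by (simp add: add_ac)
qed

locale comm_algebra_constants =
  fixes mu :: "'i::finite \<Rightarrow> 'i \<Rightarrow> 'i \<Rightarrow> 'k::field" and u :: "'i \<Rightarrow> 'k"
  assumes hmul_assoc: "\<And>x y z. hmul mu (hmul mu x y) z = hmul mu x (hmul mu y z)"
    and hmul_commute: "\<And>x y. hmul mu x y = hmul mu y x"
    and hmul_unit: "\<And>x. hmul mu u x = x"
    and unit_nonzero: "u \<noteq> 0"
begin

sublocale H: comm_semiring_1 "hmul mu" u "(+)" 0
proof unfold_locales
  fix a b c :: "'i \<Rightarrow> 'k"
  show "hmul mu (a + b) c = hmul mu a c + hmul mu b c"
    by (rule ext) (simp add: hmul_def algebra_simps sum.distrib)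
  show "hmul mu 0 a = 0" "hmul mu a 0 = 0"
    by (simp_all add: hmul_def zero_fun_def)
qed (use hmul_assoc hmul_commute hmul_unit unit_nonzero in \<open>auto simp: algebra_simps\<close>)

lemma hpow_eq_power: "hpow mu u x m = H.power x m"
  by (induction m) auto

lemma hpow_scale: "hpow mu u (\<lambda>k. c * x k) m = (\<lambda>k. c ^ m * hpow mu u x m k)"
  by (induction m) (auto simp: hmul_def hmul_unit algebra_simps sum_distrib_left)

lemma hpow_lincomb_prime_char:
  assumes p: "prime p" "of_nat p = (0::'k)"
  shows "hpow mu u (lincomb n c x) p = lincomb n (\<lambda>l. c l ^ p) (\<lambda>l. hpow mu u (x l) p)"
proof (induction n)
  case 0
  have "H.power 0 p = 0" using prime_gt_0_nat[OF p(1)] by (simp add: H.power_0_left)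
  then show ?case by (simp add: lincomb_def hpow_eq_power zero_fun_def)
next
  case (Suc n)
  have "H.of_nat m = (\<lambda>k. of_nat m * u k)" for m
    by (induction m) (simp_all only: H.of_nat_0 H.of_nat_Suc, auto simp: fun_eq_iff algebra_simps)
  then have of_nat_p: "H.of_nat p = 0"
    using p(2) by (simp add: zero_fun_def)
  have "lincomb (Suc n) c x = lincomb n c x + (\<lambda>k. c n * x n k)"
    by (simp add: lincomb_def fun_eq_iff)
  then have "hpow mu u (lincomb (Suc n) c x) p
      = hpow mu u (lincomb n c x) p + hpow mu u (\<lambda>k. c n * x n k) p"
    using H.add_power_prime_char[OF p(1) of_nat_p] by (simp add: hpow_eq_power)
  then show ?case
    by (simp only: Suc.IH hpow_scale) (simp add: lincomb_def fun_eq_iff)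
qed

end

section \<open>The coordinate lattice of a Hopf order\<close>

lemma sum_fun_apply: "(sum f A) x = (\<Sum>a\<in>A. f a x)"
  by (induction A rule: infinite_finite_induct) auto

lemma lincomb_independent_inj_on:
  fixes t :: "nat \<Rightarrow> 'i \<Rightarrow> 'k::field"
  assumes indep: "\<forall>c. lincomb n c t = (\<lambda>_. 0) \<longrightarrow> (\<forall>l<n. c l = 0)"
  shows "inj_on t {..<n}"
proof (rule inj_onI, rule ccontr)
  fix a b assume ab: "a \<in> {..<n}" "b \<in> {..<n}" "t a = t b" "a \<noteq> b"
  define c where "c = (\<lambda>l. if l = a then (1::'k) else if l = b then -1 else 0)"
  have "lincomb n c t = (\<lambda>k. t a k - t b k)"
  proof (rule ext)
    fix k
    have "(\<Sum>l<n. c l * t l k) = (\<Sum>l<n. (if l = a then t l k else 0) - (if l = b then t l k else 0))"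
      by (rule sum.cong) (auto simp: c_def ab(4))
    then show "lincomb n c t k = t a k - t b k" using ab by (simp add: lincomb_def sum_subtractf)
  qed
  then have "c a = 0" using indep ab by auto
  then show False by (simp add: c_def)
qed

lemma coordinate_functionals_exist:
  fixes t :: "nat \<Rightarrow> 'i::finite \<Rightarrow> 'k::field"
  assumes indep: "\<forall>c. lincomb n c t = (\<lambda>_. 0) \<longrightarrow> (\<forall>l<n. c l = 0)"
  shows "\<exists>g. \<forall>m<n. \<forall>c. (\<Sum>k\<in>UNIV. lincomb n c t k * g m k) = c m"
proof -
  define sc :: "'k \<Rightarrow> ('i \<Rightarrow> 'k) \<Rightarrow> ('i \<Rightarrow> 'k)" where "sc = (\<lambda>c x k. c * x k)"
  interpret VP: vector_space_pair sc "(*) :: 'k \<Rightarrow> 'k \<Rightarrow> 'k"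
    by unfold_locales (auto simp: sc_def algebra_simps)
  have lc: "lincomb n c t = (\<Sum>l<n. sc (c l) (t l))" for c
    by (rule ext) (simp add: lincomb_def sc_def sum_fun_apply)
  have inj: "inj_on t {..<n}" by (rule lincomb_independent_inj_on[OF indep])
  have ind: "VP.vs1.independent (t ` {..<n})"
  proof (rule VP.vs1.independent_if_scalars_zero)
    fix f x assume s: "(\<Sum>x\<in>t ` {..<n}. sc (f x) x) = 0" and x: "x \<in> t ` {..<n}"
    have "(\<Sum>x\<in>t ` {..<n}. sc (f x) x) = (\<Sum>l<n. sc (f (t l)) (t l))"
      by (rule sum.reindex[OF inj, unfolded comp_def])
    then have "lincomb n (\<lambda>l. f (t l)) t = (\<lambda>_. 0)" using s lc by (simp add: zero_fun_def)
    then show "f x = 0" using indep x by auto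
  qed simp
  have "\<forall>m. \<exists>G. Vector_Spaces.linear sc (*) G \<and>
      (\<forall>x\<in>t ` {..<n}. G x = (if x = t m then 1 else 0))"
    by (intro allI VP.linear_independent_extend[OF ind])
  then obtain G where G: "\<And>m. Vector_Spaces.linear sc (*) (G m)"
    "\<And>m x. x \<in> t ` {..<n} \<Longrightarrow> G m x = (if x = t m then 1 else 0)"
    by metis
  define g where "g = (\<lambda>m k. G m (ev k))"
  have "(\<Sum>k\<in>UNIV. lincomb n c t k * g m k) = c m" if m: "m < n" for m c
  proof -
    interpret L: Vector_Spaces.linear sc "(*)" "G m" by (rule G(1))
    have decomp: "x = (\<Sum>k\<in>UNIV. sc (x k) (ev k))" for x :: "'i \<Rightarrow> 'k"
      by (rule ext) (simp add: sum_fun_apply sc_def ev_def if_distrib cong: if_cong)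
    have "G m x = (\<Sum>k\<in>UNIV. x k * g m k)" for x
      by (subst decomp) (simp add: L.sum L.scale g_def)
    then have "(\<Sum>k\<in>UNIV. lincomb n c t k * g m k) = G m (lincomb n c t)"
      by (simp only:)
    also have "\<dots> = (\<Sum>l<n. c l * G m (t l))"
      by (simp add: lc L.sum L.scale)
    also have "\<dots> = (\<Sum>l<n. if l = m then c l else 0)"
      by (rule sum.cong) (use G(2) m inj in \<open>auto simp: inj_on_eq_iff\<close>)
    finally show ?thesis using m by simp
  qed
  then show ?thesis by blast
qed

context discrete_valuation
begin

lemma basis_over_val_ring_comb:
  assumes X: "is_basis_over (val_ring v) r b X"
    and "x \<in> X" "y \<in> X" "\<alpha> \<in> val_ring v" "\<beta> \<in> val_ring v"
  shows "(\<lambda>k. \<alpha> * x k + \<beta> * y k) \<in> X"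
proof -
  have X_eq: "X = {lincomb r d b | d. \<forall>l<r. d l \<in> val_ring v}"
    using X by (simp add: is_basis_over_def)
  obtain dx dy where "x = lincomb r dx b" "\<forall>l<r. dx l \<in> val_ring v"
    and "y = lincomb r dy b" "\<forall>l<r. dy l \<in> val_ring v"
    using assms(2,3) X_eq by blast
  then have "(\<lambda>k. \<alpha> * x k + \<beta> * y k) = lincomb r (\<lambda>l. \<alpha> * dx l + \<beta> * dy l) b"
    and "\<forall>l<r. \<alpha> * dx l + \<beta> * dy l \<in> val_ring v"
    using assms(4,5) by (simp_all add: lincomb_linear val_ring_add val_ring_mult)
  then show ?thesis using X_eq by blast
qed

lemma basis_over_val_ring_zero:
  assumes "is_basis_over (val_ring v) r b X"
  shows "(\<lambda>_. 0) \<in> X"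
proof -
  have "lincomb r (\<lambda>_. 0) b \<in> X" using assms by (auto simp: is_basis_over_def)
  then show ?thesis by (simp add: lincomb_def)
qed

lemma basis_over_val_ring_lincomb:
  assumes X: "is_basis_over (val_ring v) r b X"
  shows "(\<forall>l<m. c l \<in> val_ring v \<and> y l \<in> X) \<Longrightarrow> lincomb m c y \<in> X"
proof (induction m)
  case 0
  then show ?case using basis_over_val_ring_zero[OF X] by (simp add: lincomb_def)
next
  case (Suc m)
  then have "(\<lambda>k. 1 * lincomb m c y k + c m * y m k) \<in> X"
    by (intro basis_over_val_ring_comb[OF X]) auto
  then show ?case by (simp add: lincomb_def)
qed

lemma basis_over_val_ring_bounded:
  fixes X :: "('i::finite \<Rightarrow> 'k) set"
  assumes X: "is_basis_over (val_ring v) r b X"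
  shows "\<exists>N. \<forall>x\<in>X. \<forall>k. val_ge v N (x k)"
proof -
  obtain N where "\<forall>z\<in>(\<lambda>(l, k). b l k) ` ({..<r} \<times> UNIV). val_ge v N z"
    using finite_val_ge_bound by (meson finite_SigmaI finite_imageI finite_lessThan finite)
  then have N: "val_ge v N (b l k)" if "l < r" for l k
    using that by auto
  have "val_ge v N (x k)" if x: "x \<in> X" for x k
  proof -
    obtain d where "x = lincomb r d b" "\<forall>l<r. d l \<in> val_ring v"
      using x X by (auto simp: is_basis_over_def)
    then show ?thesis
      using N val_ge_mult[of 0 _ N] by (auto simp: lincomb_def val_ring_iff_val_ge intro!: val_ge_sum)
  qed
  then show ?thesis by blast
qed

lemma coordinate_lattice_full:
  fixes t :: "nat \<Rightarrow> 'i::finite \<Rightarrow> 'k"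
  assumes \<pi>: "\<pi> \<noteq> 0" "v \<pi> = 1"
    and H0: "is_basis_over (val_ring v) r b H0"
    and spans: "\<forall>x. \<exists>r c b. (\<forall>l<r. b l \<in> H0) \<and> x = lincomb r c b"
    and indep: "\<forall>c. lincomb n c t = (\<lambda>_. 0) \<longrightarrow> (\<forall>l<n. c l = 0)"
  shows "full_lattice v \<pi> n {c. lincomb n c t \<in> H0}"
proof unfold_locales
  show "(\<lambda>_. 0) \<in> {c. lincomb n c t \<in> H0}"
    using basis_over_val_ring_zero[OF H0] by (simp add: lincomb_def)
  show "(\<lambda>l. \<alpha> * c l + \<beta> * d l) \<in> {c. lincomb n c t \<in> H0}"
    if "c \<in> {c. lincomb n c t \<in> H0}" "d \<in> {c. lincomb n c t \<in> H0}"
      "\<alpha> \<in> val_ring v" "\<beta> \<in> val_ring v" for c d \<alpha> \<beta>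
    using that basis_over_val_ring_comb[OF H0] by (simp add: lincomb_linear)
  show "\<exists>N. \<forall>c\<in>{c. lincomb n c t \<in> H0}. \<forall>m<n. val_ge v N (c m)"
  proof -
    obtain g where g: "\<And>m c. m < n \<Longrightarrow> (\<Sum>k\<in>UNIV. lincomb n c t k * g m k) = c m"
      using coordinate_functionals_exist[OF indep] by blast
    obtain N0 where N0: "\<forall>x\<in>H0. \<forall>k. val_ge v N0 (x k)"
      using basis_over_val_ring_bounded[OF H0] by blast
    obtain N1 where "\<forall>z\<in>(\<lambda>(m, k). g m k) ` ({..<n} \<times> UNIV). val_ge v N1 z"
      using finite_val_ge_bound by (meson finite_SigmaI finite_imageI finite_lessThan finite)
    then have N1: "val_ge v N1 (g m k)" if "m < n" for m k
      using that by auto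
    have "val_ge v (N0 + N1) (c m)" if "lincomb n c t \<in> H0" "m < n" for c m
    proof -
      have "val_ge v (N0 + N1) (\<Sum>k\<in>UNIV. lincomb n c t k * g m k)"
        using that N0 N1 by (intro val_ge_sum val_ge_mult) auto
      then show ?thesis using g[OF that(2)] by simp
    qed
    then show ?thesis by blast
  qed
  show "\<exists>N::nat. (\<lambda>l. if l = j then \<pi> ^ N else 0) \<in> {c. lincomb n c t \<in> H0}" if j: "j < n" for j
  proof -
    obtain r' c' b' where b': "\<forall>l<r'. b' l \<in> H0" and t_j: "t j = lincomb r' c' b'"
      using spans by blast
    obtain N' where N': "\<forall>z\<in>c' ` {..<r'}. val_ge v N' z"
      using finite_val_ge_bound by blast
    define N where "N = nat (- N')"
    have "val_ge v (int N) (\<pi> ^ N)" using val_power[OF \<pi>(1), of N] \<pi> by (simp add: val_ge_def)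
    then have "val_ge v (int N + N') (\<pi> ^ N * c' l)" if "l < r'" for l
      using N' that by (intro val_ge_mult) auto
    moreover have "0 \<le> int N + N'" by (simp add: N_def)
    ultimately have "\<forall>l<r'. \<pi> ^ N * c' l \<in> val_ring v"
      unfolding val_ring_iff_val_ge by (auto intro: val_ge_mono)
    then have "lincomb r' (\<lambda>l. \<pi> ^ N * c' l) b' \<in> H0"
      using b' by (intro basis_over_val_ring_lincomb[OF H0]) auto
    moreover have "lincomb n (\<lambda>l. if l = j then \<pi> ^ N else 0) t = lincomb r' (\<lambda>l. \<pi> ^ N * c' l) b'"
      using j by (simp add: t_j lincomb_def if_distrib[of "\<lambda>x. x * _"] sum_distrib_left mult.assoc
          cong: if_cong)
    ultimately show ?thesis by (intro exI[of _ N]) simp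
  qed
qed (use \<pi> in auto)

lemma hopf_order_prim_echelon_basis:
  fixes t :: "nat \<Rightarrow> 'i::finite \<Rightarrow> 'k"
  assumes \<pi>: "\<pi> \<noteq> 0" "v \<pi> = 1"
    and H0: "is_basis_over (val_ring v) r b H0"
    and spans: "\<forall>x. \<exists>r c b. (\<forall>l<r. b l \<in> H0) \<and> x = lincomb r c b"
    and t: "is_basis_over UNIV n t P"
  shows "\<exists>s a. (\<forall>j<n. (\<forall>m<j. s j m = 0) \<and> s j j = \<pi> powi a j \<and>
                  (\<forall>m. j < m \<and> m < n \<longrightarrow> s j m = 0 \<or> v (s j m) < a m)) \<and>
               is_basis_over (val_ring v) n (\<lambda>j. lincomb n (s j) t) (H0 \<inter> P)"
proof -
  have indep: "\<forall>c. lincomb n c t = (\<lambda>_. 0) \<longrightarrow> (\<forall>l<n. c l = 0)"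
    using t by (simp add: is_basis_over_def)
  interpret L: full_lattice v \<pi> n "{c. lincomb n c t \<in> H0}"
    by (rule coordinate_lattice_full[OF \<pi> H0 spans indep])
  obtain s where s: "\<forall>j<n. s j \<in> {c. lincomb n c t \<in> H0} \<and> (\<forall>m<j. s j m = 0) \<and>
      s j j = \<pi> powi L.pivot j \<and> (\<forall>m. j < m \<and> m < n \<longrightarrow> s j m = 0 \<or> v (s j m) < L.pivot m)"
    and span: "\<forall>c\<in>{c. lincomb n c t \<in> H0}.
      \<exists>r. (\<forall>l. r l \<in> val_ring v) \<and> (\<forall>m<n. c m = (\<Sum>l<n. r l * s l m))"
    using L.echelon_basis_exists by blast
  have "is_basis_over (val_ring v) n (\<lambda>j. lincomb n (s j) t) (H0 \<inter> P)"
    using s span \<pi>(1) by (intro L.echelon_lincomb_basis[OF t refl]) auto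
  then show ?thesis using s by blast
qed

lemma echelon_transpose_normal_form:
  fixes s :: "nat \<Rightarrow> nat \<Rightarrow> 'k" and a :: "nat \<Rightarrow> int"
  assumes \<pi>: "\<pi> \<noteq> 0" "v \<pi> = 1"
    and s: "\<forall>j<n. (\<forall>m<j. s j m = 0) \<and> s j j = \<pi> powi a j \<and>
              (\<forall>m. j < m \<and> m < n \<longrightarrow> s j m = 0 \<or> v (s j m) < a m)"
  defines "\<Theta> \<equiv> \<lambda>i j. s j i"
  shows "(\<exists>\<Psi>. \<forall>i<n. \<forall>j<n.
            (\<Sum>k<n. \<Theta> i k * \<Psi> k j) = (if i = j then 1 else 0) \<and>
            (\<Sum>k<n. \<Psi> i k * \<Theta> k j) = (if i = j then 1 else 0)) \<and>
         (\<forall>i<n. \<forall>j<n. i < j \<longrightarrow> \<Theta> i j = 0) \<and>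
         (\<forall>i<n. \<forall>j\<le>i. \<Theta> i j \<noteq> 0 \<longrightarrow> v (\<Theta> i j) \<le> v (\<Theta> i i)) \<and>
         (\<forall>i<n. \<Theta> i i = \<pi> powi v (\<Theta> i i))"
proof -
  have v_diag: "v (s i i) = a i" if "i < n" for i
    using s that val_power_int[OF \<pi>(1)] \<pi>(2) by simp
  have reduced: "s j i = 0 \<or> v (s j i) < a i" if "j < i" "i < n" for i j
    using s that by (meson less_trans)
  have lower: "\<forall>i<n. \<forall>j<n. i < j \<longrightarrow> \<Theta> i j = 0"
    and diag: "\<forall>i<n. \<Theta> i i = \<pi> powi v (\<Theta> i i)"
    using s v_diag by (auto simp: \<Theta>_def)
  moreover have "\<forall>i<n. \<forall>j\<le>i. \<Theta> i j \<noteq> 0 \<longrightarrow> v (\<Theta> i j) \<le> v (\<Theta> i i)"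
  proof (intro allI impI)
    fix i j assume "i < n" "j \<le> i" "\<Theta> i j \<noteq> 0"
    then show "v (\<Theta> i j) \<le> v (\<Theta> i i)"
      using v_diag reduced[of j i] by (cases "j = i") (auto simp: \<Theta>_def)
  qed
  moreover have "\<forall>i<n. \<Theta> i i \<noteq> 0"
    using s \<pi>(1) by (simp add: \<Theta>_def)
  ultimately show ?thesis using lower_triangular_invertible[of n \<Theta>] by blast
qed

end

context comm_algebra_constants
begin

lemma hpow_lincomb_prime_char_basis:
  assumes p: "prime p" "of_nat p = (0::'k)"
    and B: "\<forall>i<n. hpow mu u (t i) p = lincomb n (\<lambda>j. B j i) t"
  shows "hpow mu u (lincomb n c t) p = lincomb n (\<lambda>m. \<Sum>l<n. c l ^ p * B m l) t"
proof -
  have "hpow mu u (lincomb n c t) p = lincomb n (\<lambda>l. c l ^ p) (\<lambda>l. lincomb n (\<lambda>j. B j l) t)"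
    unfolding hpow_lincomb_prime_char[OF p] using B by (auto simp: lincomb_def)
  then show ?thesis by (simp add: lincomb_lincomb)
qed

lemma frobenius_matrix_relation:
  assumes p: "prime p" "of_nat p = (0::'k)"
    and B: "\<forall>i<n. hpow mu u (t i) p = lincomb n (\<lambda>j. B j i) t"
    and indep: "\<forall>c. lincomb n c t = (\<lambda>_. 0) \<longrightarrow> (\<forall>l<n. c l = 0)"
    and A: "\<forall>i<n. hpow mu u (lincomb n (s i) t) p = lincomb n (\<lambda>j. A j i) (\<lambda>j. lincomb n (s j) t)"
  shows "\<forall>i<n. \<forall>j<n. (\<Sum>k<n. s k i * A k j) = (\<Sum>k<n. B i k * s j k ^ p)"
proof (intro allI impI)
  fix i j assume "i < n" "j < n"
  have "lincomb n (\<lambda>m. \<Sum>l<n. A l j * s l m) t = lincomb n (\<lambda>m. \<Sum>l<n. s j l ^ p * B m l) t"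
    using A \<open>j < n\<close> by (simp add: lincomb_lincomb hpow_lincomb_prime_char_basis[OF p B])
  then show "(\<Sum>k<n. s k i * A k j) = (\<Sum>k<n. B i k * s j k ^ p)"
    using lincomb_injective[OF indep] \<open>i < n\<close> by (fastforce simp: mult.commute)
qed

end

theorem proposition6p1:
  fixes v :: "'k::field \<Rightarrow> int" and \<pi> :: 'k and p n :: nat
    and mu :: "'i::finite \<Rightarrow> 'i \<Rightarrow> 'i \<Rightarrow> 'k" and u :: "'i \<Rightarrow> 'k"
    and D :: "'i \<Rightarrow> 'i \<Rightarrow> 'i \<Rightarrow> 'k" and e :: "'i \<Rightarrow> 'k" and S :: "'i \<Rightarrow> 'i \<Rightarrow> 'k"
    and t :: "nat \<Rightarrow> 'i \<Rightarrow> 'k" and B :: "nat \<Rightarrow> nat \<Rightarrow> 'k"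
    and H0 :: "('i \<Rightarrow> 'k) set"
  assumes R: "complete_dvr_char_p v \<pi> p"
    and H: "comm_cocomm_hopf_algebra mu u D e S"
    and rank: "card (UNIV :: 'i set) = p ^ n"
    and primgen: "primitively_generated mu u D"
    and t_basis: "is_basis_over UNIV n t (Prim D u)"
    and B_assoc: "\<forall>i<n. hpow mu u (t i) p = lincomb n (\<lambda>j. B j i) t"
    and H0: "hopf_order v mu u D e S H0"
  shows "\<exists>(s :: nat \<Rightarrow> 'i \<Rightarrow> 'k) (A :: nat \<Rightarrow> nat \<Rightarrow> 'k) (\<Theta> :: nat \<Rightarrow> nat \<Rightarrow> 'k).
     is_basis_over (val_ring v) n s (H0 \<inter> Prim D u) \<and>
     (\<forall>i<n. hpow mu u (s i) p = lincomb n (\<lambda>j. A j i) s) \<and>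
     (\<forall>i<n. \<forall>j<n. A i j \<in> val_ring v) \<and>
     (\<exists>\<Psi> :: nat \<Rightarrow> nat \<Rightarrow> 'k. \<forall>i<n. \<forall>j<n.
        (\<Sum>k<n. \<Theta> i k * \<Psi> k j) = (if i = j then 1 else 0) \<and>
        (\<Sum>k<n. \<Psi> i k * \<Theta> k j) = (if i = j then 1 else 0)) \<and>
     (\<forall>i<n. \<forall>j<n. i < j \<longrightarrow> \<Theta> i j = 0) \<and>
     (\<forall>i<n. \<forall>j\<le>i. \<Theta> i j \<noteq> 0 \<longrightarrow> v (\<Theta> i j) \<le> v (\<Theta> i i)) \<and>
     (\<forall>i<n. \<Theta> i i = \<pi> powi v (\<Theta> i i)) \<and>
     (\<forall>i<n. \<forall>j<n. (\<Sum>k<n. \<Theta> i k * A k j) = (\<Sum>k<n. B i k * (\<Theta> k j) ^ p))"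
proof -
  have p: "prime p" "of_nat p = (0::'k)" and \<pi>: "\<pi> \<noteq> 0" "v \<pi> = 1"
    and "discrete_valuation v"
    using R by (auto simp: complete_dvr_char_p_def discrete_valuation_def)
  interpret discrete_valuation v by fact
  interpret comm_algebra_constants mu u
    using H by unfold_locales (auto simp: comm_cocomm_hopf_algebra_def counit_def)
  obtain r b where H0_basis: "is_basis_over (val_ring v) r b H0"
    and H0_spans: "\<forall>x. \<exists>r c b. (\<forall>l<r. b l \<in> H0) \<and> x = lincomb r c b"
    using H0 by (auto simp: hopf_order_def)
  obtain s a where s: "\<forall>j<n. (\<forall>m<j. s j m = 0) \<and> s j j = \<pi> powi a j \<and>
      (\<forall>m. j < m \<and> m < n \<longrightarrow> s j m = 0 \<or> v (s j m) < a m)"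
    and basis: "is_basis_over (val_ring v) n (\<lambda>j. lincomb n (s j) t) (H0 \<inter> Prim D u)"
    using hopf_order_prim_echelon_basis[OF \<pi> H0_basis H0_spans t_basis] by blast
  have hpow_H0: "x \<in> H0 \<Longrightarrow> hpow mu u x m \<in> H0" for x m
    using H0 by (induction m) (auto simp: hopf_order_def)
  have Prim: "Prim D u = {lincomb n c t | c. True}"
    using t_basis by (simp add: is_basis_over_def)
  have hpow_mem: "\<forall>i<n. hpow mu u (lincomb n (s i) t) p \<in> H0 \<inter> Prim D u"
  proof (intro allI impI IntI)
    fix i assume "i < n"
    then show "hpow mu u (lincomb n (s i) t) p \<in> H0"
      using basis hpow_H0 by (auto simp: is_basis_over_def)
    show "hpow mu u (lincomb n (s i) t) p \<in> Prim D u"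
      by (auto simp: Prim hpow_lincomb_prime_char_basis[OF p B_assoc])
  qed
  obtain A where A: "\<forall>i<n. (\<forall>j<n. A j i \<in> val_ring v) \<and>
      hpow mu u (lincomb n (s i) t) p = lincomb n (\<lambda>j. A j i) (\<lambda>j. lincomb n (s j) t)"
    using basis_over_coeffs_exist[OF basis hpow_mem] by blast
  have "\<forall>i<n. \<forall>j<n. (\<Sum>k<n. s k i * A k j) = (\<Sum>k<n. B i k * s j k ^ p)"
    using t_basis A by (intro frobenius_matrix_relation[OF p B_assoc]) (auto simp: is_basis_over_def)
  then show ?thesis
    using basis A echelon_transpose_normal_form[OF \<pi> s]
    by (intro exI[of _ "\<lambda>j. lincomb n (s j) t", OF exI[of _ A, OF exI[of _ "\<lambda>i j. s j i"]]]) auto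

qed

end
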